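(* Consider the two-regime Gaussian non-homogeneous Markov-switching AR model described in the context, with a fixed parameter $\theta\in\tilde\Theta$. Then the Markov chain $(X_k,Y_{k-s+1}^k)_k$ on $\{1,2\}\times\mathbb R^s$ is $\psi$-irreducible with $\psi=\mu$. Moreover, for every $R>0$, the set $E_R:=\{(x,y_{-s+1}^0)\in\{1,2\}\times\mathbb R^s:\ \|y_{-s+1}^0\|\le R\}$ is $\nu_s$-small and $\nu_{s+1}$-small for some measures $\nu_s$ and $\nu_{s+1}$ equivalent to $\mu$; hence the Markov chain is aperiodic.
   Context: Let $s\ge1$ and $1\le r\le s$ be integers, $E=\{1,2\}$ with counting measure, $K=\mathbb R$ with Lebesgue measure, $\mu$ the product of counting measure on $\{1,2\}$ and Lebesgue measure on $\mathbb R^s$, and $\|\cdot\|$ a norm on $\mathbb R^s$. The process $(X_k,Y_k)_k$ on $\{1,2\}\times\mathbb R$ satisfies $Y_k=\beta_0^{(X_k)}+\sum_{\ell=1}^s\beta_\ell^{(X_k)}Y_{k-\ell}+\sigma^{(X_k)}\epsilon_k$ with $(\epsilon_k)$ iid standard Gaussian (independent of the past), i.e. the conditional density of $Y_k$ given the past and $X_k=x$ is the Gaussian density with mean $\beta_0^{(x)}+\sum_{\ell=1}^s\beta_\ell^{(x)}y_{k-\ell}$ and standard deviation $\sigma^{(x)}$; and, conditionally on the past, $X_k$ depends only on $X_{k-1}$ and $Y_{k-s}^{k-1}$ with $P(X_k=x|X_{k-1}=x,Y_{k-s}^{k-1}=y_{k-s}^{k-1})=\pi_-^{(x)}+\frac{1-\pi_-^{(x)}-\pi_+^{(x)}}{1+\exp(\lambda_0^{(x)}+\lambda_1^{(x)}y_{k-r})}$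 and the probability of switching to the other state equal to one minus this. The parameter is $\theta=((\beta_i^{(x)}),(\sigma^{(x)}),(\pi_-^{(x)}),(\pi_+^{(x)}),(\lambda_i^{(x)}))$, with $\beta_i^{(x)},\lambda_i^{(x)}\in\mathbb R$, and $\tilde\Theta$ is the set of such $\theta$ with, for every $x\in\{1,2\}$, $\sigma^{(x)}>0$ and $0<\pi_-^{(x)}<1-\pi_+^{(x)}<1$. *)

theory Defs
  imports "HOL-Probability.Probability"
begin

text \<open>States are pairs (x, y) with regime x in {1,2} and the window
  y = (y_{-s+1}, ..., y_0) stored as an extensional function on {..<s} with
  y i = y_{-s+1+i}; hence the lag-l value Y_{k-l} (l = 1..s) used to generate Y_k
  is y (s - l) when the current state is the window ending at time k-1.\<close>

record msar_param =
  ms_beta :: "nat \<Rightarrow> nat \<Rightarrow> real"   (* ms_beta x i = beta_i^(x), i = 0..s *)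
  ms_sigma :: "nat \<Rightarrow> real"
  ms_pim :: "nat \<Rightarrow> real"
  ms_pip :: "nat \<Rightarrow> real"
  ms_lam0 :: "nat \<Rightarrow> real"
  ms_lam1 :: "nat \<Rightarrow> real"

definition theta_tilde :: "msar_param set" where
  "theta_tilde = {\<theta>. \<forall>x\<in>{1,2::nat}. ms_sigma \<theta> x > 0 \<and> 0 < ms_pim \<theta> x
       \<and> ms_pim \<theta> x < 1 - ms_pip \<theta> x \<and> 1 - ms_pip \<theta> x < 1}"

definition Rs :: "nat \<Rightarrow> (nat \<Rightarrow> real) measure" where
  "Rs s = (\<Pi>\<^sub>M i\<in>{..<s}. lborel)"

text \<open>The reference measure mu on {1,2} x R^s.\<close>
definition state_space :: "nat \<Rightarrow> (nat \<times> (nat \<Rightarrow> real)) measure" where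
  "state_space s = count_space {1,2} \<Otimes>\<^sub>M Rs s"

definition shift :: "nat \<Rightarrow> (nat \<Rightarrow> real) \<Rightarrow> real \<Rightarrow> nat \<Rightarrow> real" where
  "shift s y z = (\<lambda>i. if i < s - 1 then y (Suc i) else if i = s - 1 then z else undefined)"

definition ar_mean :: "nat \<Rightarrow> msar_param \<Rightarrow> nat \<Rightarrow> (nat \<Rightarrow> real) \<Rightarrow> real" where
  "ar_mean s \<theta> x y = ms_beta \<theta> x 0 + (\<Sum>l=1..s. ms_beta \<theta> x l * y (s - l))"

definition stay_prob :: "nat \<Rightarrow> nat \<Rightarrow> msar_param \<Rightarrow> nat \<Rightarrow> (nat \<Rightarrow> real) \<Rightarrow> real" where
  "stay_prob s r \<theta> x y = ms_pim \<theta> x + (1 - ms_pim \<theta> x - ms_pip \<theta> x)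
       / (1 + exp (ms_lam0 \<theta> x + ms_lam1 \<theta> x * y (s - r)))"

definition trans_prob :: "nat \<Rightarrow> nat \<Rightarrow> msar_param \<Rightarrow> nat \<Rightarrow> nat \<Rightarrow> (nat \<Rightarrow> real) \<Rightarrow> real" where
  "trans_prob s r \<theta> x x' y = (if x' = x then stay_prob s r \<theta> x y else 1 - stay_prob s r \<theta> x y)"

text \<open>One-step transition operator of the chain (X_k, Y_{k-s+1}^k) acting on
  nonnegative functions: (P f)(x,y) = E[f(X_1, Y_{-s+2}^1) | X_0 = x, Y_{-s+1}^0 = y].\<close>
definition msar_step :: "nat \<Rightarrow> nat \<Rightarrow> msar_param \<Rightarrow>
    (nat \<times> (nat \<Rightarrow> real) \<Rightarrow> ennreal) \<Rightarrow> (nat \<times> (nat \<Rightarrow> real) \<Rightarrow> ennreal)" where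
  "msar_step s r \<theta> f = (\<lambda>(x, y). \<Sum>x'\<in>{1,2}. ennreal (trans_prob s r \<theta> x x' y) *
      (\<integral>\<^sup>+ z. ennreal (normal_density (ar_mean s \<theta> x' y) (ms_sigma \<theta> x') z)
              * f (x', shift s y z) \<partial>lborel))"

definition msar_Pn :: "nat \<Rightarrow> nat \<Rightarrow> msar_param \<Rightarrow> nat \<Rightarrow>
    (nat \<times> (nat \<Rightarrow> real)) set \<Rightarrow> nat \<times> (nat \<Rightarrow> real) \<Rightarrow> ennreal" where
  "msar_Pn s r \<theta> n A = (msar_step s r \<theta> ^^ n) (indicator A)"

definition psi_irreducible :: "(nat \<Rightarrow> 'a set \<Rightarrow> 'a \<Rightarrow> ennreal) \<Rightarrow> 'a measure \<Rightarrow> 'a measure \<Rightarrow> bool" where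
  "psi_irreducible Pn M \<psi> \<longleftrightarrow> sets \<psi> = sets M \<and>
     (\<forall>A\<in>sets M. emeasure \<psi> A > 0 \<longrightarrow> (\<forall>x\<in>space M. \<exists>n\<ge>1. Pn n A x > 0))"

definition small_set :: "(nat \<Rightarrow> 'a set \<Rightarrow> 'a \<Rightarrow> ennreal) \<Rightarrow> 'a measure \<Rightarrow> nat \<Rightarrow> 'a measure \<Rightarrow> 'a set \<Rightarrow> bool" where
  "small_set Pn M m \<nu> C \<longleftrightarrow> C \<in> sets M \<and> sets \<nu> = sets M \<and> emeasure \<nu> (space M) > 0 \<and>
     (\<forall>x\<in>C. \<forall>A\<in>sets M. Pn m A x \<ge> emeasure \<nu> A)"

definition equivalent_measures :: "'a measure \<Rightarrow> 'a measure \<Rightarrow> bool" where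
  "equivalent_measures \<nu> \<mu> \<longleftrightarrow> sets \<nu> = sets \<mu> \<and>
     (\<forall>A\<in>sets \<mu>. emeasure \<nu> A = 0 \<longleftrightarrow> emeasure \<mu> A = 0)"

definition aperiodic :: "(nat \<Rightarrow> 'a set \<Rightarrow> 'a \<Rightarrow> ennreal) \<Rightarrow> 'a measure \<Rightarrow> 'a measure \<Rightarrow> bool" where
  "aperiodic Pn M \<psi> \<longleftrightarrow> \<not> (\<exists>d\<ge>2. \<exists>D :: nat \<Rightarrow> 'a set.
      (\<forall>i<d. D i \<in> sets M) \<and> disjoint_family_on D {..<d} \<and>
      (\<forall>i<d. \<forall>x\<in>D i. Pn 1 (D (Suc i mod d)) x = 1) \<and>
      emeasure \<psi> (space M - (\<Union>i<d. D i)) = 0)"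

definition is_norm_Rs :: "nat \<Rightarrow> ((nat \<Rightarrow> real) \<Rightarrow> real) \<Rightarrow> bool" where
  "is_norm_Rs s N \<longleftrightarrow>
     (\<forall>y\<in>space (Rs s). N y = 0 \<longleftrightarrow> y = restrict (\<lambda>_. 0) {..<s}) \<and>
     (\<forall>y\<in>space (Rs s). \<forall>c. N (restrict (\<lambda>i. c * y i) {..<s}) = \<bar>c\<bar> * N y) \<and>
     (\<forall>y\<in>space (Rs s). \<forall>z\<in>space (Rs s). N (restrict (\<lambda>i. y i + z i) {..<s}) \<le> N y + N z)"

definition ball_set :: "nat \<Rightarrow> ((nat \<Rightarrow> real) \<Rightarrow> real) \<Rightarrow> real \<Rightarrow> (nat \<times> (nat \<Rightarrow> real)) set" where
  "ball_set s N R = {(x, y). x \<in> {1,2} \<and> y \<in> space (Rs s) \<and> N y \<le> R}"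

end

theory Submission
  imports Defs
begin

text \<open>
  One transition of the chain dominates a Gaussian in the new observation, uniformly in the
  regime and locally uniformly in the window: the switching probabilities are bounded below by
  the smallest of the parameters \<open>\<pi>\<^sub>-\<close>, \<open>\<pi>\<^sub>+\<close>, and the autoregressive means grow at most
  linearly in the window. Iterating \<open>s\<close> times replaces the whole window by fresh observations, so on
  every \<open>\<ell>\<^sub>1\<close>-ball, hence on every norm ball, \<open>P^s\<close> and \<open>P^(s+1)\<close> dominate multiples of
  the measure with density \<open>exp (- e \<parallel>y\<parallel>\<^sub>1\<^sup>2)\<close> with respect to \<open>\<mu>\<close>. Hence every point
  reaches every set of positive \<open>\<mu>\<close>-measure after both \<open>s\<close> and \<open>s + 1\<close> steps, which gives
  \<open>\<mu>\<close>-irreducibility and rules out any cycle of period \<open>d \<ge> 2\<close>.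
\<close>

subsection \<open>Measurability on \<open>\<real>\<^sup>s\<close>\<close>

lemma space_Rs: "space (Rs s) = {..<s} \<rightarrow>\<^sub>E (UNIV::real set)"
  by (simp add: Rs_def space_PiM)

lemma space_state_space: "space (state_space s) = {1,2} \<times> space (Rs s)"
  by (simp add: state_space_def space_pair_measure)

lemma restrict_Rs: "y \<in> space (Rs s) \<Longrightarrow> restrict y {..<s} = y"
  by (auto simp: space_Rs fun_eq_iff PiE_def extensional_def)

lemma restrict_in_Rs: "restrict f {..<s} \<in> space (Rs s)"
  by (simp add: space_Rs)

interpretation lborel_power: product_sigma_finite "\<lambda>_::nat. lborel :: real measure"
  by standard

lemma sigma_finite_Rs: "sigma_finite_measure (Rs s)"
  unfolding Rs_def by (rule lborel_power.sigma_finite) simp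

lemma Rs_component_measurable: "j < s \<Longrightarrow> (\<lambda>y. y j) \<in> borel_measurable (Rs s)"
  unfolding Rs_def using measurable_component_singleton[of j "{..<s}" "\<lambda>_. lborel"]
  by (simp add: measurable_lborel2)

lemma measurable_state_space_Pair:
  "x \<in> {1,2} \<Longrightarrow> g \<in> measurable M (Rs s) \<Longrightarrow> (\<lambda>w. (x, g w)) \<in> measurable M (state_space s)"
  unfolding state_space_def by (auto intro!: measurable_Pair)

text \<open>Windows are functions on \<open>\<nat>\<close> (equal to \<open>undefined\<close> off \<open>{..<s}\<close>), so \<open>Rs s\<close>
  embeds measurably into \<open>\<real>\<^sup>\<nat>\<close>, whose product \<sigma>-algebra is the Borel \<sigma>-algebra of
  the product topology.\<close>

lemma continuous_map_imp_measurable_Rs: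
  assumes f: "continuous_map (product_topology (\<lambda>_. euclideanreal) {..<s}) euclideanreal f"
  shows "f \<in> borel_measurable (Rs s)"
proof -
  have "continuous_map euclidean euclideanreal (\<lambda>z::nat \<Rightarrow> real. f (restrict z {..<s}))"
    using continuous_map_compose[OF continuous_on_restrict[of "{..<s}" UNIV] f]
    by (simp add: o_def euclidean_product_topology)
  then have "(\<lambda>z::nat \<Rightarrow> real. f (restrict z {..<s})) \<in> borel_measurable (Pi\<^sub>M UNIV (\<lambda>_. borel))"
    using measurable_cong_sets[OF sets_PiM_equal_borel refl]
    by (auto intro: borel_measurable_continuous_onI)
  moreover have "(\<lambda>y. y) \<in> measurable (Rs s) (Pi\<^sub>M UNIV (\<lambda>_. borel :: real measure))"
  proof (rule measurable_PiM_single')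
    fix i :: nat
    show "(\<lambda>y. y i) \<in> borel_measurable (Rs s)"
    proof (cases "i < s")
      case False
      then have "(\<lambda>y. y i) \<in> borel_measurable (Rs s) \<longleftrightarrow> (\<lambda>_. undefined :: real) \<in> borel_measurable (Rs s)"
        by (intro measurable_cong) (auto simp: space_Rs PiE_def extensional_def)
      then show ?thesis by simp
    qed (rule Rs_component_measurable)
  qed (auto simp: space_Rs)
  ultimately have "(\<lambda>y. f (restrict y {..<s})) \<in> borel_measurable (Rs s)"
    by (rule measurable_compose[rotated])
  then show ?thesis by (simp add: restrict_Rs cong: measurable_cong)
qed

lemma shift_eq: "1 \<le> s \<Longrightarrow> Defs.shift s y z = (\<lambda>i\<in>{..<s}. if i < s - 1 then y (Suc i) else z)"
  by (auto simp: shift_def fun_eq_iff)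

lemma measurable_shift[measurable]:
  "1 \<le> s \<Longrightarrow> (\<lambda>p. Defs.shift s (fst p) (snd p)) \<in> measurable (Rs s \<Otimes>\<^sub>M lborel) (Rs s)"
  unfolding shift_eq Rs_def
  by (rule measurable_restrict) (case_tac "i < s - 1", auto)

lemma measurable_shift_observation[measurable]:
  assumes "1 \<le> s"
  shows "Defs.shift s y \<in> measurable lborel (Rs s)"
proof -
  have "(\<lambda>z. \<lambda>i\<in>{..<s}. if i < s - 1 then y (Suc i) else z) \<in> measurable lborel (Rs s)"
    unfolding Rs_def by (rule measurable_restrict) (case_tac "i < s - 1", auto)
  moreover have "Defs.shift s y = (\<lambda>z. \<lambda>i\<in>{..<s}. if i < s - 1 then y (Suc i) else z)"
    using shift_eq[OF assms] by (simp add: fun_eq_iff)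
  ultimately show ?thesis by simp
qed

lemma shift_in_Rs: "1 \<le> s \<Longrightarrow> Defs.shift s y z \<in> space (Rs s)"
  using measurable_space[OF measurable_shift_observation] by simp

lemma measurable_after_shift:
  "1 \<le> s \<Longrightarrow> f \<in> borel_measurable (state_space s) \<Longrightarrow> x \<in> {1,2}
    \<Longrightarrow> (\<lambda>z. f (x, Defs.shift s y z)) \<in> borel_measurable lborel"
  by (rule measurable_compose[OF measurable_state_space_Pair[OF _ measurable_shift_observation]])

subsection \<open>Windows and the \<open>\<ell>\<^sub>1\<close> norm\<close>

definition shift_window :: "nat \<Rightarrow> nat \<Rightarrow> (nat \<Rightarrow> real) \<Rightarrow> (nat \<Rightarrow> real) \<Rightarrow> nat \<Rightarrow> real" where
  "shift_window s k y w =
     (\<lambda>i. if i < s - k then y (i + k) else if i < s then w (i - (s - k)) else undefined)"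

lemma shift_window_one: "1 \<le> s \<Longrightarrow> shift_window s 1 y ((\<lambda>_. undefined)(0 := z)) = Defs.shift s y z"
  unfolding shift_def shift_window_def by (auto simp: fun_eq_iff)

lemma shift_shift_window:
  "k < s \<Longrightarrow> Defs.shift s (shift_window s k y w) z = shift_window s (Suc k) y (w(k := z))"
  unfolding shift_def shift_window_def by (auto simp: fun_eq_iff)

lemma shift_window_full: "w \<in> space (Rs s) \<Longrightarrow> shift_window s s y w = w"
  unfolding shift_window_def space_Rs by (auto simp: fun_eq_iff PiE_def extensional_def)

lemma measurable_shift_window[measurable]:
  assumes "k \<le> s"
  shows "shift_window s k y \<in> measurable (Rs k) (Rs s)"
proof -
  have "(\<lambda>w. w (i - (s - k))) \<in> borel_measurable (Rs k)" if "\<not> i < s - k" "i < s" for i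
    using Rs_component_measurable[of "i - (s - k)" k] that assms by simp
  then have "(\<lambda>w. \<lambda>i\<in>{..<s}. if i < s - k then y (i + k) else w (i - (s - k))) \<in> measurable (Rs k) (Rs s)"
    unfolding Rs_def[of s]
    by (intro measurable_restrict) (case_tac "i < s - k", auto simp: measurable_lborel2 simp flip: Rs_def)
  moreover have "shift_window s k y = (\<lambda>w. \<lambda>i\<in>{..<s}. if i < s - k then y (i + k) else w (i - (s - k)))"
    by (auto simp: shift_window_def fun_eq_iff)
  ultimately show ?thesis by simp
qed

definition l1_norm :: "nat \<Rightarrow> (nat \<Rightarrow> real) \<Rightarrow> real" where
  "l1_norm s y = (\<Sum>i<s. \<bar>y i\<bar>)"

lemma l1_norm_nonneg: "0 \<le> l1_norm s y"
  unfolding l1_norm_def by (simp add: sum_nonneg)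

lemma abs_le_l1_norm: "i < s \<Longrightarrow> \<bar>y i\<bar> \<le> l1_norm s y"
  unfolding l1_norm_def by (rule member_le_sum[of i "{..<s}" "\<lambda>i. \<bar>y i\<bar>", simplified]) auto

lemma l1_norm_fun_upd: "l1_norm (Suc k) (w(k := z)) = l1_norm k w + \<bar>z\<bar>"
  unfolding l1_norm_def by simp

lemma l1_norm_shift_window:
  assumes "k \<le> s"
  shows "l1_norm s (shift_window s k y w) \<le> l1_norm s y + l1_norm k w"
proof -
  have "l1_norm s (shift_window s k y w)
      = (\<Sum>i\<in>{0..<s-k}. \<bar>y (i + k)\<bar>) + (\<Sum>i\<in>{s-k..<s}. \<bar>w (i - (s - k))\<bar>)"
    unfolding l1_norm_def atLeast0LessThan[symmetric] using assms
    by (subst sum.atLeastLessThan_concat[of 0 "s - k" s, symmetric])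
       (auto simp: shift_window_def intro!: arg_cong2[where f = "(+)"] sum.cong)
  also have "(\<Sum>i\<in>{0..<s-k}. \<bar>y (i + k)\<bar>) = (\<Sum>j\<in>{k..<s}. \<bar>y j\<bar>)"
    using sum.atLeastLessThan_shift_0[of "\<lambda>j. \<bar>y j\<bar>" k s] assms by (simp add: comp_def add.commute)
  also have "\<dots> \<le> l1_norm s y"
    unfolding l1_norm_def by (intro sum_mono2) auto
  also have "(\<Sum>i\<in>{s-k..<s}. \<bar>w (i - (s - k))\<bar>) = l1_norm k w"
    using sum.atLeastLessThan_shift_0[of "\<lambda>i. \<bar>w (i - (s - k))\<bar>" "s - k" s] assms
    by (simp add: comp_def l1_norm_def atLeast0LessThan)
  finally show ?thesis by simp
qed

lemma l1_norm_shift: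
  assumes "1 \<le> s"
  shows "l1_norm s (Defs.shift s y z) \<le> l1_norm s y + \<bar>z\<bar>"
  using l1_norm_shift_window[OF assms, of y "(\<lambda>_. undefined)(0 := z)"]
  unfolding shift_window_one[OF assms] by (simp add: l1_norm_def)

lemma measurable_l1_norm[measurable]: "l1_norm k \<in> borel_measurable (Rs k)"
  unfolding l1_norm_def[abs_def]
  by (intro borel_measurable_sum borel_measurable_abs Rs_component_measurable) auto

lemma compactin_l1_sphere:
  "compactin (product_topology (\<lambda>_. euclideanreal) {..<s}) {y \<in> space (Rs s). l1_norm s y = 1}"
proof (rule closed_compactin)
  let ?X = "product_topology (\<lambda>_. euclideanreal) {..<s}"
  show "compactin ?X (PiE {..<s} (\<lambda>_. {-1..1::real}))"
    by (subst compactin_PiE) auto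
  show "{y \<in> space (Rs s). l1_norm s y = 1} \<subseteq> PiE {..<s} (\<lambda>_. {-1..1::real})"
  proof
    fix y assume "y \<in> {y \<in> space (Rs s). l1_norm s y = 1}"
    then show "y \<in> PiE {..<s} (\<lambda>_. {-1..1::real})"
      using abs_le_l1_norm[of _ s y] by (auto simp: space_Rs PiE_def Pi_def abs_le_iff)
  qed
  have "closedin ?X {y \<in> topspace ?X. l1_norm s y \<in> {1}}"
    unfolding l1_norm_def[abs_def]
    by (rule closedin_continuous_map_preimage) (auto intro!: continuous_intros)
  then show "closedin ?X {y \<in> space (Rs s). l1_norm s y = 1}"
    by (simp add: space_Rs)
qed

subsection \<open>Norms on \<open>\<real>\<^sup>s\<close>\<close>

definition unit_vec :: "nat \<Rightarrow> nat \<Rightarrow> nat \<Rightarrow> real" where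
  "unit_vec s k = restrict (\<lambda>j. if j = k then 1 else 0) {..<s}"

locale Rs_norm =
  fixes s :: nat and N :: "(nat \<Rightarrow> real) \<Rightarrow> real"
  assumes is_norm: "is_norm_Rs s N"
begin

lemma norm_zero: "N (restrict (\<lambda>_. 0) {..<s}) = 0"
  using is_norm restrict_in_Rs unfolding is_norm_Rs_def by blast

lemma norm_eq_0_iff: "y \<in> space (Rs s) \<Longrightarrow> N y = 0 \<longleftrightarrow> y = restrict (\<lambda>_. 0) {..<s}"
  using is_norm unfolding is_norm_Rs_def by blast

lemma norm_scale: "y \<in> space (Rs s) \<Longrightarrow> N (restrict (\<lambda>i. c * y i) {..<s}) = \<bar>c\<bar> * N y"
  using is_norm unfolding is_norm_Rs_def by blast

lemma norm_triangle:
  "y \<in> space (Rs s) \<Longrightarrow> z \<in> space (Rs s) \<Longrightarrow> N (restrict (\<lambda>i. y i + z i) {..<s}) \<le> N y + N z"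
  using is_norm unfolding is_norm_Rs_def by blast

lemma norm_nonneg:
  assumes y: "y \<in> space (Rs s)"
  shows "0 \<le> N y"
proof -
  have "restrict (\<lambda>i. y i + restrict (\<lambda>i. (-1) * y i) {..<s} i) {..<s} = restrict (\<lambda>_. 0) {..<s}"
    by (auto simp: fun_eq_iff)
  then have "0 \<le> N y + N (restrict (\<lambda>i. (-1) * y i) {..<s})"
    using norm_triangle[OF y restrict_in_Rs] norm_zero by metis
  then show ?thesis using norm_scale[OF y, of "-1"] by simp
qed

lemma norm_le_l1_norm: obtains M where "M > 0" and "\<And>y. y \<in> space (Rs s) \<Longrightarrow> N y \<le> M * l1_norm s y"
proof
  define M where "M = (\<Sum>j<s. N (unit_vec s j)) + 1"
  have unit_le: "N (unit_vec s j) \<le> M" if "j < s" for j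
    using member_le_sum[of j "{..<s}" "\<lambda>j. N (unit_vec s j)"] that
    by (simp add: M_def unit_vec_def norm_nonneg restrict_in_Rs)
  show "M > 0"
    unfolding M_def by (simp add: unit_vec_def norm_nonneg restrict_in_Rs sum_nonneg add_nonneg_pos)
  fix y assume y: "y \<in> space (Rs s)"
  have "N (restrict (\<lambda>i. if i < k then y i else 0) {..<s}) \<le> (\<Sum>i<k. \<bar>y i\<bar> * N (unit_vec s i))"
    if "k \<le> s" for k
    using that
  proof (induction k)
    case 0
    then show ?case using norm_zero by (simp add: restrict_def)
  next
    case (Suc k)
    have "restrict (\<lambda>i. restrict (\<lambda>i. if i < k then y i else 0) {..<s} i
        + restrict (\<lambda>i. y k * unit_vec s k i) {..<s} i) {..<s}
      = restrict (\<lambda>i. if i < Suc k then y i else 0) {..<s}" (is "?sum = _")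
      by (auto simp: fun_eq_iff unit_vec_def less_Suc_eq)
    have "N (restrict (\<lambda>i. if i < Suc k then y i else 0) {..<s})
        \<le> N (restrict (\<lambda>i. if i < k then y i else 0) {..<s}) + N (restrict (\<lambda>i. y k * unit_vec s k i) {..<s})"
      using norm_triangle[OF restrict_in_Rs restrict_in_Rs,
          of "\<lambda>i. if i < k then y i else 0" "\<lambda>i. y k * unit_vec s k i"]
      unfolding \<open>?sum = _\<close> .
    also have "N (restrict (\<lambda>i. y k * unit_vec s k i) {..<s}) = \<bar>y k\<bar> * N (unit_vec s k)"
      using norm_scale[of "unit_vec s k" "y k"] by (simp add: unit_vec_def restrict_in_Rs)
    finally show ?case using Suc by simp
  qed
  from this[of s] have "N y \<le> (\<Sum>i<s. \<bar>y i\<bar> * N (unit_vec s i))"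
    using restrict_Rs[OF y] by (simp cong: restrict_cong)
  also have "\<dots> \<le> (\<Sum>i<s. \<bar>y i\<bar> * M)"
    by (intro sum_mono mult_left_mono unit_le) auto
  finally show "N y \<le> M * l1_norm s y"
    by (simp add: l1_norm_def sum_distrib_left mult.commute)
qed

lemma norm_lipschitz:
  obtains M where "M > 0" and "\<And>x y. x \<in> space (Rs s) \<Longrightarrow> y \<in> space (Rs s)
    \<Longrightarrow> \<bar>N y - N x\<bar> \<le> M * (\<Sum>i<s. \<bar>y i - x i\<bar>)"
proof -
  obtain M where M: "M > 0" "\<And>y. y \<in> space (Rs s) \<Longrightarrow> N y \<le> M * l1_norm s y"
    using norm_le_l1_norm by blast
  have one_side: "N y - N x \<le> M * (\<Sum>i<s. \<bar>y i - x i\<bar>)"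
    if x: "x \<in> space (Rs s)" and y: "y \<in> space (Rs s)" for x y
  proof -
    define d where "d = restrict (\<lambda>i. y i - x i) {..<s}"
    have "restrict (\<lambda>i. x i + d i) {..<s} = y"
      using y by (auto simp: d_def fun_eq_iff space_Rs PiE_def extensional_def)
    then have "N y \<le> N x + N d"
      using norm_triangle[OF x, of d] by (metis d_def restrict_in_Rs)
    moreover have "N d \<le> M * l1_norm s d"
      unfolding d_def by (rule M(2)[OF restrict_in_Rs])
    ultimately show ?thesis by (simp add: d_def l1_norm_def)
  qed
  show thesis
  proof (rule that[OF M(1)])
    fix x y assume "x \<in> space (Rs s)" "y \<in> space (Rs s)"
    then show "\<bar>N y - N x\<bar> \<le> M * (\<Sum>i<s. \<bar>y i - x i\<bar>)"
      using one_side[of x y] one_side[of y x] by (simp add: abs_le_iff abs_minus_commute)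
  qed
qed

lemma continuous_map_norm: "continuous_map (product_topology (\<lambda>_. euclideanreal) {..<s}) euclideanreal N"
  unfolding continuous_map_atin limitin_canonical_iff tendsto_iff
proof (intro ballI allI impI)
  let ?X = "product_topology (\<lambda>_. euclideanreal) {..<s}"
  obtain M where M: "M > 0" "\<And>x y. x \<in> space (Rs s) \<Longrightarrow> y \<in> space (Rs s)
    \<Longrightarrow> \<bar>N y - N x\<bar> \<le> M * (\<Sum>i<s. \<bar>y i - x i\<bar>)"
    using norm_lipschitz by blast
  fix x e assume x: "x \<in> topspace ?X" and e: "(e::real) > 0"
  define U where "U = {y \<in> topspace ?X. (\<Sum>i<s. \<bar>y i - x i\<bar>) \<in> {..<e / M}}"
  have "openin ?X U"
    unfolding U_def by (rule openin_continuous_map_preimage) (auto intro!: continuous_intros)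
  moreover have "x \<in> U" using x e M by (simp add: U_def)
  moreover have "dist (N y) (N x) < e" if "y \<in> U" for y
  proof -
    have "M * (\<Sum>i<s. \<bar>y i - x i\<bar>) < e"
      using that M by (simp add: U_def field_simps)
    then show ?thesis
      using M(2)[of x y] x that by (simp add: dist_real_def U_def space_Rs)
  qed
  ultimately show "\<forall>\<^sub>F y in atin ?X x. dist (N y) (N x) < e"
    unfolding eventually_atin by blast
qed

lemma measurable_norm[measurable]: "N \<in> borel_measurable (Rs s)"
  by (rule continuous_map_imp_measurable_Rs[OF continuous_map_norm])

lemma ball_set_measurable: "ball_set s N R \<in> sets (state_space s)"
proof -
  have "{y \<in> space (Rs s). N y \<le> R} \<in> sets (Rs s)"
    by measurable
  moreover have "ball_set s N R = {1,2} \<times> {y \<in> space (Rs s). N y \<le> R}"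
    unfolding ball_set_def by auto
  ultimately show ?thesis
    unfolding state_space_def by (auto intro: pair_measureI)
qed

lemma norm_pos_on_l1_sphere:
  obtains m where "m > 0" and "\<And>y. y \<in> space (Rs s) \<Longrightarrow> l1_norm s y = 1 \<Longrightarrow> m \<le> N y"
proof (cases "{y \<in> space (Rs s). l1_norm s y = 1} = {}")
  case True
  show thesis
    by (rule that[of 1]) (use True in auto)
next
  case False
  define S where "S = {y \<in> space (Rs s). l1_norm s y = 1}"
  have "compact (N ` S)"
    using image_compactin[OF compactin_l1_sphere continuous_map_norm] by (simp add: S_def)
  moreover have "N ` S \<noteq> {}"
    using False by (simp add: S_def)
  ultimately obtain m where "m \<in> N ` S" and m: "\<forall>t\<in>N ` S. m \<le> t"
    using compact_attains_inf by blast
  then obtain y0 where y0: "y0 \<in> S" and "m = N y0" by blast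
  with m have min: "\<And>y. y \<in> S \<Longrightarrow> N y0 \<le> N y" by blast
  have y0_Rs: "y0 \<in> space (Rs s)" and y0_l1: "l1_norm s y0 = 1"
    using y0 by (simp_all add: S_def)
  have "y0 \<noteq> restrict (\<lambda>_. 0) {..<s}"
  proof
    assume "y0 = restrict (\<lambda>_. 0) {..<s}"
    with y0_l1 show False by (simp add: l1_norm_def)
  qed
  then have "N y0 \<noteq> 0"
    using norm_eq_0_iff[OF y0_Rs] by blast
  then have "N y0 > 0"
    using norm_nonneg[OF y0_Rs] by linarith
  then show thesis
    using min that[of "N y0"] by (simp add: S_def)
qed

text \<open>Equivalence of norms, by scaling to the \<open>\<ell>\<^sub>1\<close> unit sphere.\<close>

lemma l1_norm_le_norm: obtains \<kappa> where "\<kappa> > 0" and "\<And>y. y \<in> space (Rs s) \<Longrightarrow> \<kappa> * l1_norm s y \<le> N y"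
proof -
  obtain m where m: "m > 0" "\<And>y. y \<in> space (Rs s) \<Longrightarrow> l1_norm s y = 1 \<Longrightarrow> m \<le> N y"
    using norm_pos_on_l1_sphere by blast
  have "m * l1_norm s y \<le> N y" if y: "y \<in> space (Rs s)" for y
  proof (cases "l1_norm s y = 0")
    case True
    then show ?thesis using norm_nonneg[OF y] by simp
  next
    case False
    define t where "t = l1_norm s y"
    have t: "t > 0" using False l1_norm_nonneg[of s y] by (simp add: t_def)
    have "l1_norm s (restrict (\<lambda>i. (1 / t) * y i) {..<s}) = 1"
      using t by (simp add: l1_norm_def t_def abs_mult flip: sum_divide_distrib)
    then have "m \<le> N (restrict (\<lambda>i. (1 / t) * y i) {..<s})"
      by (intro m(2) restrict_in_Rs)
    also have "\<dots> = N y / t"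
      using norm_scale[OF y, of "1 / t"] t by simp
    finally show ?thesis using t by (simp add: t_def field_simps)
  qed
  with m(1) show thesis by (rule that)
qed

end

subsection \<open>Gaussian estimates\<close>

lemma power2_add_le: "((a::real) + b)\<^sup>2 \<le> 2 * a\<^sup>2 + 2 * b\<^sup>2"
  using sum_squares_bound[of a b] by (simp add: power2_sum)

lemma nn_integral_normal_density: "0 < \<sigma> \<Longrightarrow> (\<integral>\<^sup>+ z. ennreal (normal_density m \<sigma> z) \<partial>lborel) = 1"
  using prob_space.emeasure_space_1[OF prob_space_normal_density] by (simp add: emeasure_density)

lemma normal_density_lower_bound:
  fixes m \<sigma> z L :: real
  assumes \<sigma>: "0 < \<sigma>" "\<sigma>\<^sup>2 \<le> T" "1 / \<sigma>\<^sup>2 \<le> S" and m: "m\<^sup>2 \<le> M0 + M1 * L\<^sup>2"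
  shows "exp (- S * M0) / sqrt (2 * pi * T) * exp (- S * z\<^sup>2) * exp (- S * M1 * L\<^sup>2)
    \<le> normal_density m \<sigma> z"
proof -
  have S: "0 \<le> S" using \<sigma> by (smt (verit) zero_less_divide_1_iff zero_less_power2)
  have "(z - m)\<^sup>2 / (2 * \<sigma>\<^sup>2) \<le> (z\<^sup>2 + m\<^sup>2) * (1 / \<sigma>\<^sup>2)"
    using power2_add_le[of z "- m"] \<sigma>(1) by (simp add: field_simps)
  also have "\<dots> \<le> (z\<^sup>2 + m\<^sup>2) * S"
    using \<sigma>(3) by (intro mult_left_mono) auto
  also have "\<dots> \<le> S * z\<^sup>2 + S * M0 + S * M1 * L\<^sup>2"
    using mult_left_mono[OF m S] by (simp add: algebra_simps)
  finally have "exp (- S * M0) * exp (- S * z\<^sup>2) * exp (- S * M1 * L\<^sup>2) \<le> exp (- ((z - m)\<^sup>2 / (2 * \<sigma>\<^sup>2)))"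
    by (simp flip: exp_add)
  moreover have "1 / sqrt (2 * pi * T) \<le> 1 / sqrt (2 * pi * \<sigma>\<^sup>2)"
  proof -
    have "0 < T" using \<sigma>(1,2) by (metis less_le_trans zero_less_power)
    then show ?thesis
      using \<sigma> by (intro divide_left_mono) (auto intro!: real_sqrt_le_mono mult_pos_pos)
  qed
  ultimately have "1 / sqrt (2 * pi * T) * (exp (- S * M0) * exp (- S * z\<^sup>2) * exp (- S * M1 * L\<^sup>2))
      \<le> 1 / sqrt (2 * pi * \<sigma>\<^sup>2) * exp (- ((z - m)\<^sup>2 / (2 * \<sigma>\<^sup>2)))"
    by (intro mult_mono) auto
  then show ?thesis
    unfolding normal_density_def by (simp add: mult_ac)
qed

lemma abs_ar_mean_le:
  "\<bar>ar_mean s \<theta> x y\<bar> \<le> \<bar>ms_beta \<theta> x 0\<bar> + (\<Sum>l=1..s. \<bar>ms_beta \<theta> x l\<bar>) * l1_norm s y"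
proof -
  have "\<bar>\<Sum>l=1..s. ms_beta \<theta> x l * y (s - l)\<bar> \<le> (\<Sum>l=1..s. \<bar>ms_beta \<theta> x l\<bar> * l1_norm s y)"
    by (rule order_trans[OF sum_abs sum_mono]) (auto simp: abs_mult intro!: mult_left_mono abs_le_l1_norm)
  then show ?thesis
    unfolding ar_mean_def sum_distrib_right[symmetric] by linarith
qed

lemma gaussian_exponent_split:
  fixes c e lw lp ly z :: real
  assumes "0 \<le> c" "0 \<le> e" "0 \<le> lw" "0 \<le> lp" "lp \<le> ly + lw"
  shows "- (2 * c) * ly\<^sup>2 - (e + 3 * c) * (lw + \<bar>z\<bar>)\<^sup>2 \<le> - e * lw\<^sup>2 - c * z\<^sup>2 - c * lp\<^sup>2"
proof -
  define T where "T = (lw + \<bar>z\<bar>)\<^sup>2"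
  have "lp\<^sup>2 \<le> (ly + lw)\<^sup>2" using assms by (intro power_mono) auto
  then have "c * lp\<^sup>2 \<le> c * (2 * ly\<^sup>2 + 2 * lw\<^sup>2)"
    using power2_add_le[of ly lw] assms(1) by (intro mult_left_mono) auto
  moreover have "lw\<^sup>2 \<le> T" "z\<^sup>2 \<le> T"
    unfolding T_def using assms power_mono[of "\<bar>z\<bar>" "lw + \<bar>z\<bar>" 2] by (auto intro!: power_mono)
  then have "e * lw\<^sup>2 \<le> e * T" "c * z\<^sup>2 \<le> c * T" "c * lw\<^sup>2 \<le> c * T"
    using assms by (auto intro!: mult_left_mono)
  ultimately show ?thesis unfolding T_def[symmetric] by (simp add: algebra_simps)
qed

subsection \<open>Window integrals and the minorizing measures\<close>

definition window_integral ::
    "nat \<Rightarrow> nat \<Rightarrow> real \<Rightarrow> (nat \<Rightarrow> real) \<Rightarrow> (nat \<times> (nat \<Rightarrow> real) \<Rightarrow> ennreal) \<Rightarrow> ennreal" where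
  "window_integral s k e y f =
     (\<integral>\<^sup>+ w. ennreal (exp (- e * (l1_norm k w)\<^sup>2)) * (\<Sum>x\<in>{1,2}. f (x, shift_window s k y w)) \<partial>Rs k)"

lemma measurable_window_integrand[measurable]:
  assumes "k \<le> s" and [measurable]: "f \<in> borel_measurable (state_space s)"
  shows "(\<lambda>w. ennreal (exp (- e * (l1_norm k w)\<^sup>2)) * (\<Sum>x\<in>{1,2}. f (x, shift_window s k y w)))
    \<in> borel_measurable (Rs k)"
proof -
  have "(\<lambda>w. f (x, shift_window s k y w)) \<in> borel_measurable (Rs k)" if "x \<in> {1,2}" for x
    by (rule measurable_compose[OF measurable_state_space_Pair[OF that measurable_shift_window[OF assms(1)]]]) simp
  then show ?thesis by measurable
qed

lemma nn_integral_Rs_one: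
  assumes "G \<in> borel_measurable (Rs 1)"
  shows "integral\<^sup>N (Rs 1) G = (\<integral>\<^sup>+ z. G ((\<lambda>_. undefined)(0 := z)) \<partial>lborel)"
proof -
  have "{..<1::nat} = insert 0 {}" by auto
  then have "integral\<^sup>N (Rs 1) G = (\<integral>\<^sup>+ w. (\<integral>\<^sup>+ z. G (w(0 := z)) \<partial>lborel) \<partial>Rs 0)"
    using lborel_power.product_nn_integral_insert[of "{}" 0 G] assms by (simp add: Rs_def)
  also have "\<dots> = (\<integral>\<^sup>+ z. G ((\<lambda>_. undefined)(0 := z)) \<partial>lborel)"
    by (simp add: Rs_def PiM_empty nn_integral_count_space_finite fun_upd_def)
  finally show ?thesis .
qed

lemma nn_integral_Rs_Suc:
  assumes "G \<in> borel_measurable (Rs (Suc k))"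
  shows "integral\<^sup>N (Rs (Suc k)) G = (\<integral>\<^sup>+ w. \<integral>\<^sup>+ z. G (w(k := z)) \<partial>lborel \<partial>Rs k)"
proof -
  have "{..<Suc k} = insert k {..<k}" by auto
  then show ?thesis
    using lborel_power.product_nn_integral_insert[of "{..<k}" k G] assms by (simp add: Rs_def)
qed

lemma window_integral_one:
  assumes s: "1 \<le> s" and f: "f \<in> borel_measurable (state_space s)"
  shows "window_integral s 1 e y f
    = (\<integral>\<^sup>+ z. ennreal (exp (- e * z\<^sup>2)) * (\<Sum>x\<in>{1,2}. f (x, Defs.shift s y z)) \<partial>lborel)"
proof -
  have "l1_norm 1 ((\<lambda>_. undefined)(0 := z)) = \<bar>z\<bar>" for z
    by (simp add: l1_norm_def)
  then show ?thesis
    unfolding window_integral_def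
    by (subst nn_integral_Rs_one[OF measurable_window_integrand[OF s f]])
       (simp only: shift_window_one[OF s] power2_abs)
qed

lemma window_integral_Suc_cmult:
  assumes k: "Suc k \<le> s" and f: "f \<in> borel_measurable (state_space s)"
  shows "ennreal C * window_integral s (Suc k) e y f = (\<integral>\<^sup>+ w. ennreal C * \<integral>\<^sup>+ z.
      ennreal (exp (- e * (l1_norm k w + \<bar>z\<bar>)\<^sup>2)) * (\<Sum>x\<in>{1,2}. f (x, Defs.shift s (shift_window s k y w) z)) \<partial>lborel \<partial>Rs k)"
proof -
  let ?I = "\<lambda>v. ennreal (exp (- e * (l1_norm (Suc k) v)\<^sup>2)) * (\<Sum>x\<in>{1,2}. f (x, shift_window s (Suc k) y v))"
  have [measurable]: "?I \<in> borel_measurable (Rs (Suc k))"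
    by (rule measurable_window_integrand[OF k f])
  have [measurable]: "(\<lambda>z. \<Sum>x\<in>{1,2}. f (x, Defs.shift s p z)) \<in> borel_measurable lborel" for p
    using measurable_after_shift[OF _ f] k by (intro borel_measurable_sum) auto
  have "ennreal C * window_integral s (Suc k) e y f = (\<integral>\<^sup>+ v. ennreal C * ?I v \<partial>Rs (Suc k))"
    unfolding window_integral_def by (rule nn_integral_cmult[symmetric]) measurable
  also have "\<dots> = (\<integral>\<^sup>+ w. \<integral>\<^sup>+ z. ennreal C * ?I (w(k := z)) \<partial>lborel \<partial>Rs k)"
    by (rule nn_integral_Rs_Suc) measurable
  also have "\<dots> = (\<integral>\<^sup>+ w. \<integral>\<^sup>+ z. ennreal C * (ennreal (exp (- e * (l1_norm k w + \<bar>z\<bar>)\<^sup>2))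
      * (\<Sum>x\<in>{1,2}. f (x, Defs.shift s (shift_window s k y w) z))) \<partial>lborel \<partial>Rs k)"
    using k by (intro nn_integral_cong) (simp add: l1_norm_fun_upd shift_shift_window)
  also have "\<dots> = (\<integral>\<^sup>+ w. ennreal C * \<integral>\<^sup>+ z. ennreal (exp (- e * (l1_norm k w + \<bar>z\<bar>)\<^sup>2))
      * (\<Sum>x\<in>{1,2}. f (x, Defs.shift s (shift_window s k y w) z)) \<partial>lborel \<partial>Rs k)"
    by (intro nn_integral_cong nn_integral_cmult) measurable
  finally show ?thesis .
qed

definition weighted_integral :: "nat \<Rightarrow> real \<Rightarrow> (nat \<times> (nat \<Rightarrow> real) \<Rightarrow> ennreal) \<Rightarrow> ennreal" where
  "weighted_integral s e f = (\<integral>\<^sup>+ w. ennreal (exp (- e * (l1_norm s w)\<^sup>2)) * (\<Sum>x\<in>{1,2}. f (x, w)) \<partial>Rs s)"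

lemma window_integral_full: "window_integral s s e y f = weighted_integral s e f"
  unfolding window_integral_def weighted_integral_def
  by (intro nn_integral_cong) (simp add: shift_window_full)

definition weighted_measure :: "nat \<Rightarrow> real \<Rightarrow> real \<Rightarrow> (nat \<times> (nat \<Rightarrow> real)) measure" where
  "weighted_measure s e K = density (state_space s) (\<lambda>p. ennreal (K * exp (- e * (l1_norm s (snd p))\<^sup>2)))"

lemma measurable_weight[measurable]:
  "(\<lambda>p. ennreal (K * exp (- e * (l1_norm s (snd p))\<^sup>2))) \<in> borel_measurable (state_space s)"
  unfolding state_space_def by measurable

lemma emeasure_weighted_measure:
  assumes K: "K \<ge> 0" and A: "A \<in> sets (state_space s)"
  shows "emeasure (weighted_measure s e K) A = ennreal K * weighted_integral s e (indicator A)"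
proof -
  interpret Rs: sigma_finite_measure "Rs s" by (rule sigma_finite_Rs)
  let ?f = "\<lambda>p. ennreal (K * exp (- e * (l1_norm s (snd p))\<^sup>2)) * indicator A p"
  have f: "?f \<in> borel_measurable (state_space s)"
    using A by measurable
  then have fiber: "(\<lambda>w. ?f (x, w)) \<in> borel_measurable (Rs s)" if "x \<in> {1,2}" for x
    using measurable_compose[OF measurable_state_space_Pair[OF that measurable_ident_sets[OF refl]] f] by simp
  from f have "?f \<in> borel_measurable (count_space {1,2} \<Otimes>\<^sub>M Rs s)"
    by (simp add: state_space_def)
  then have "emeasure (weighted_measure s e K) A = (\<integral>\<^sup>+ x. \<integral>\<^sup>+ w. ?f (x, w) \<partial>Rs s \<partial>count_space {1,2})"
    using A measurable_weight[of K e s]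
    by (simp add: weighted_measure_def emeasure_density Rs.nn_integral_fst[symmetric] state_space_def)
  also have "\<dots> = (\<Sum>x\<in>{1,2::nat}. \<integral>\<^sup>+ w. ?f (x, w) \<partial>Rs s)"
    by (rule nn_integral_count_space_finite) simp
  also have "\<dots> = (\<integral>\<^sup>+ w. (\<Sum>x\<in>{1,2::nat}. ?f (x, w)) \<partial>Rs s)"
    by (intro nn_integral_sum[symmetric] fiber)
  also have "\<dots> = (\<integral>\<^sup>+ w. ennreal K * (ennreal (exp (- e * (l1_norm s w)\<^sup>2)) * (\<Sum>x\<in>{1,2::nat}. indicator A (x, w))) \<partial>Rs s)"
    using K by (intro nn_integral_cong) (simp add: ennreal_mult algebra_simps)
  also have "\<dots> = ennreal K * weighted_integral s e (indicator A)"
  proof -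
    have "(\<lambda>w. indicator A (x, w) :: ennreal) \<in> borel_measurable (Rs s)" if "x \<in> {1,2}" for x
      using measurable_compose[OF measurable_state_space_Pair[OF that measurable_ident_sets[OF refl]]
          borel_measurable_indicator[OF A]] by simp
    then show ?thesis
      unfolding weighted_integral_def by (intro nn_integral_cmult borel_measurable_times borel_measurable_sum) auto
  qed
  finally show ?thesis .
qed

lemma equivalent_weighted_measure:
  assumes K: "K > 0"
  shows "equivalent_measures (weighted_measure s e K) (state_space s)"
  unfolding equivalent_measures_def
proof (intro conjI ballI)
  fix A assume A: "A \<in> sets (state_space s)"
  have "emeasure (weighted_measure s e K) A
      = (\<integral>\<^sup>+ p. ennreal (K * exp (- e * (l1_norm s (snd p))\<^sup>2)) * indicator A p \<partial>state_space s)"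
    using A measurable_weight[of K e s] unfolding weighted_measure_def by (simp add: emeasure_density)
  also have "\<dots> = 0 \<longleftrightarrow>
      (AE p in state_space s. ennreal (K * exp (- e * (l1_norm s (snd p))\<^sup>2)) * indicator A p = 0)"
  proof (rule nn_integral_0_iff_AE)
    show "(\<lambda>p. ennreal (K * exp (- e * (l1_norm s (snd p))\<^sup>2)) * indicator A p) \<in> borel_measurable (state_space s)"
      using A by measurable
  qed
  also have "\<dots> \<longleftrightarrow> (AE p in state_space s. p \<notin> A)"
    using K by (intro AE_cong) (auto simp: indicator_def)
  also have "\<dots> \<longleftrightarrow> emeasure (state_space s) A = 0"
    using A sets.sets_into_space[OF A] by (intro AE_iff_measurable) auto
  finally show "emeasure (weighted_measure s e K) A = 0 \<longleftrightarrow> emeasure (state_space s) A = 0" .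
qed (simp add: weighted_measure_def)

lemma equivalent_measures_pos:
  "equivalent_measures \<nu> M \<Longrightarrow> A \<in> sets M \<Longrightarrow> 0 < emeasure M A \<Longrightarrow> 0 < emeasure \<nu> A"
  unfolding equivalent_measures_def by (simp add: zero_less_iff_neq_zero)

lemma emeasure_state_space_pos: "0 < emeasure (state_space s) (space (state_space s))"
proof -
  interpret Rs: sigma_finite_measure "Rs s" by (rule sigma_finite_Rs)
  define C where "C = PiE {..<s} (\<lambda>_. {0..1::real})"
  have C: "C \<in> sets (Rs s)"
    unfolding C_def Rs_def by (intro sets_PiM_I_finite) auto
  have "emeasure (Rs s) C = 1"
    unfolding C_def Rs_def by (subst lborel_power.emeasure_PiM) auto
  then have "emeasure (state_space s) ({1} \<times> C) = 1"
    unfolding state_space_def using C by (subst Rs.emeasure_pair_measure_Times) auto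
  moreover have "emeasure (state_space s) ({1} \<times> C) \<le> emeasure (state_space s) (space (state_space s))"
    using sets.sets_into_space[OF C] by (intro emeasure_mono sets.top) (auto simp: space_state_space)
  ultimately show ?thesis by (metis not_gr_zero not_one_le_zero)
qed

subsection \<open>The Markov-switching autoregression\<close>

locale msar_model =
  fixes s r :: nat and \<theta> :: msar_param
  assumes one_le_s: "1 \<le> s" and one_le_r: "1 \<le> r" and r_le_s: "r \<le> s"
    and theta: "\<theta> \<in> theta_tilde"
begin

abbreviation step where "step \<equiv> msar_step s r \<theta>"

lemma sigma_pos: "x \<in> {1,2} \<Longrightarrow> 0 < ms_sigma \<theta> x"
  using theta unfolding theta_tilde_def by auto

lemma stay_prob_bounds:
  assumes "x \<in> {1,2}"
  shows "ms_pim \<theta> x < stay_prob s r \<theta> x y" "stay_prob s r \<theta> x y < 1 - ms_pip \<theta> x"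
proof -
  define d where "d = 1 - ms_pim \<theta> x - ms_pip \<theta> x"
  define e where "e = exp (ms_lam0 \<theta> x + ms_lam1 \<theta> x * y (s - r))"
  have "d > 0" using theta assms unfolding theta_tilde_def d_def by auto
  then have "0 < d / (1 + e)" "d / (1 + e) < d"
    by (auto simp: e_def divide_less_eq add_pos_pos)
  then show "ms_pim \<theta> x < stay_prob s r \<theta> x y" "stay_prob s r \<theta> x y < 1 - ms_pip \<theta> x"
    unfolding stay_prob_def e_def[symmetric] d_def[symmetric] by (auto simp: d_def)
qed

definition min_trans_prob :: real where
  "min_trans_prob = min (min (ms_pim \<theta> 1) (ms_pim \<theta> 2)) (min (ms_pip \<theta> 1) (ms_pip \<theta> 2))"

lemma min_trans_prob_pos: "0 < min_trans_prob"
  using theta unfolding theta_tilde_def min_trans_prob_def by auto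

lemma min_trans_prob_le: "x \<in> {1,2} \<Longrightarrow> x' \<in> {1,2} \<Longrightarrow> min_trans_prob \<le> trans_prob s r \<theta> x x' y"
  using stay_prob_bounds[of x y] unfolding trans_prob_def min_trans_prob_def by auto

lemma sum_trans_prob:
  assumes x: "x \<in> {1,2}"
  shows "(\<Sum>x'\<in>{1,2::nat}. ennreal (trans_prob s r \<theta> x x' y)) = 1"
proof -
  define p where "p = stay_prob s r \<theta> x y"
  have "0 \<le> p" "p \<le> 1"
    using stay_prob_bounds[OF x, of y] theta x unfolding p_def theta_tilde_def by auto
  then have "ennreal p + ennreal (1 - p) = 1"
    by (subst ennreal_plus[symmetric]) auto
  with x show ?thesis
    unfolding trans_prob_def p_def[symmetric] by (auto simp: add.commute)
qed

lemma measurable_trans_prob[measurable]: "(\<lambda>y. trans_prob s r \<theta> x x' y) \<in> borel_measurable (Rs s)"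
proof -
  have [measurable]: "(\<lambda>y. y (s - r)) \<in> borel_measurable (Rs s)"
    using one_le_r r_le_s by (intro Rs_component_measurable) auto
  show ?thesis unfolding trans_prob_def stay_prob_def by measurable
qed

lemma measurable_ar_mean[measurable]: "ar_mean s \<theta> x \<in> borel_measurable (Rs s)"
  unfolding ar_mean_def[abs_def] using one_le_s
  by (intro borel_measurable_add borel_measurable_sum borel_measurable_times Rs_component_measurable) auto

lemma measurable_step:
  assumes f[measurable]: "f \<in> borel_measurable (state_space s)"
  shows "step f \<in> borel_measurable (state_space s)"
proof -
  have "(\<lambda>p. f (x', Defs.shift s (fst p) (snd p))) \<in> borel_measurable (Rs s \<Otimes>\<^sub>M lborel)"
    if "x' \<in> {1,2}" for x'
    using measurable_compose[OF measurable_state_space_Pair[OF that measurable_shift[OF one_le_s]] f] .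
  then have integrand: "(\<lambda>p. ennreal (normal_density (ar_mean s \<theta> x' (fst p)) (ms_sigma \<theta> x') (snd p))
      * f (x', Defs.shift s (fst p) (snd p))) \<in> borel_measurable (Rs s \<Otimes>\<^sub>M lborel)" if "x' \<in> {1,2}" for x'
    using that unfolding normal_density_def by measurable
  have "(\<lambda>y. \<integral>\<^sup>+ z. ennreal (normal_density (ar_mean s \<theta> x' y) (ms_sigma \<theta> x') z)
      * f (x', Defs.shift s y z) \<partial>lborel) \<in> borel_measurable (Rs s)" if "x' \<in> {1,2}" for x'
    using lborel.borel_measurable_nn_integral_fst[OF integrand[OF that]] by simp
  then have fiber: "(\<lambda>y. step f (x, y)) \<in> borel_measurable (Rs s)" for x
    unfolding msar_step_def
    by (auto intro!: borel_measurable_sum borel_measurable_times measurable_compose[OF _ measurable_ennreal])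
  have "(\<lambda>p. (\<lambda>x p. step f (x, snd p)) (fst p) p) \<in> borel_measurable (state_space s)"
  proof (rule measurable_compose_countable)
    show "(\<lambda>p. step f (x, snd p)) \<in> borel_measurable (state_space s)" for x
      unfolding state_space_def by (rule measurable_compose[OF measurable_snd fiber])
    show "fst \<in> state_space s \<rightarrow>\<^sub>M count_space UNIV"
      unfolding state_space_def
      by (rule measurable_compose[OF measurable_fst]) (simp add: measurable_count_space_eq1)
  qed
  then show ?thesis by simp
qed

lemma measurable_step_power:
  "f \<in> borel_measurable (state_space s) \<Longrightarrow> (step ^^ n) f \<in> borel_measurable (state_space s)"
  by (induction n) (auto intro: measurable_step)

lemma normal_density_ar_mean_lower_bound:
  obtains A c where "A > 0" "c > 0"
    and "\<And>x y z. x \<in> {1,2} \<Longrightarrow> A * exp (- c * z\<^sup>2) * exp (- c * (l1_norm s y)\<^sup>2)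
           \<le> normal_density (ar_mean s \<theta> x y) (ms_sigma \<theta> x) z"
proof
  define b where "b x = (\<Sum>l=1..s. \<bar>ms_beta \<theta> x l\<bar>)" for x
  define S where "S = 1 / (ms_sigma \<theta> 1)\<^sup>2 + 1 / (ms_sigma \<theta> 2)\<^sup>2"
  define T where "T = (ms_sigma \<theta> 1)\<^sup>2 + (ms_sigma \<theta> 2)\<^sup>2"
  define M0 where "M0 = 2 * ((ms_beta \<theta> 1 0)\<^sup>2 + (ms_beta \<theta> 2 0)\<^sup>2)"
  define M1 where "M1 = 2 * ((b 1)\<^sup>2 + (b 2)\<^sup>2)"
  have S: "S > 0" and T: "T > 0"
    using sigma_pos[of 1] sigma_pos[of 2] by (auto simp: S_def T_def intro!: add_pos_pos)
  have M1: "M1 \<ge> 0" by (simp add: M1_def)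
  show "exp (- S * M0) / sqrt (2 * pi * T) > 0" "S * (M1 + 1) > 0"
    using S T M1 by auto
  fix x :: nat and y :: "nat \<Rightarrow> real" and z :: real
  assume x: "x \<in> {1,2}"
  have "\<bar>ar_mean s \<theta> x y\<bar>\<^sup>2 \<le> (\<bar>ms_beta \<theta> x 0\<bar> + b x * l1_norm s y)\<^sup>2"
    unfolding b_def by (intro power_mono abs_ar_mean_le) auto
  also have "\<dots> \<le> 2 * (ms_beta \<theta> x 0)\<^sup>2 + 2 * (b x)\<^sup>2 * (l1_norm s y)\<^sup>2"
    using power2_add_le[of "\<bar>ms_beta \<theta> x 0\<bar>" "b x * l1_norm s y"] by (simp add: power_mult_distrib)
  also have "\<dots> \<le> M0 + M1 * (l1_norm s y)\<^sup>2"
    using x by (cases "x = 1") (auto simp: M0_def M1_def algebra_simps)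
  finally have mean: "(ar_mean s \<theta> x y)\<^sup>2 \<le> M0 + M1 * (l1_norm s y)\<^sup>2" by simp
  have "(ms_sigma \<theta> x)\<^sup>2 \<le> T" "1 / (ms_sigma \<theta> x)\<^sup>2 \<le> S"
    using x sigma_pos[of 1] sigma_pos[of 2] by (auto simp: S_def T_def)
  then have "exp (- S * M0) / sqrt (2 * pi * T) * exp (- S * z\<^sup>2) * exp (- S * M1 * (l1_norm s y)\<^sup>2)
      \<le> normal_density (ar_mean s \<theta> x y) (ms_sigma \<theta> x) z"
    using normal_density_lower_bound[OF sigma_pos[OF x] _ _ mean] by blast
  moreover have "exp (- (S * (M1 + 1)) * z\<^sup>2) \<le> exp (- S * z\<^sup>2)"
    "exp (- (S * (M1 + 1)) * (l1_norm s y)\<^sup>2) \<le> exp (- S * M1 * (l1_norm s y)\<^sup>2)"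
    using S M1 by (auto intro!: mult_right_mono simp: algebra_simps)
  ultimately show "exp (- S * M0) / sqrt (2 * pi * T) * exp (- (S * (M1 + 1)) * z\<^sup>2)
      * exp (- (S * (M1 + 1)) * (l1_norm s y)\<^sup>2) \<le> normal_density (ar_mean s \<theta> x y) (ms_sigma \<theta> x) z"
    using T by (elim order_trans[rotated]) (intro mult_mono mult_left_mono; simp)
qed

definition step_minorized :: "real \<Rightarrow> real \<Rightarrow> bool" where
  "step_minorized a c \<longleftrightarrow> (\<forall>x\<in>{1,2}. \<forall>y. \<forall>f\<in>borel_measurable (state_space s).
     (\<integral>\<^sup>+ z. ennreal (a * exp (- c * z\<^sup>2) * exp (- c * (l1_norm s y)\<^sup>2))
        * (\<Sum>x'\<in>{1,2}. f (x', Defs.shift s y z)) \<partial>lborel) \<le> step f (x, y))"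

definition power_minorized :: "nat \<Rightarrow> real \<Rightarrow> real \<Rightarrow> bool" where
  "power_minorized k D e \<longleftrightarrow> (\<forall>x\<in>{1,2}. \<forall>y. \<forall>f\<in>borel_measurable (state_space s).
     ennreal (D * exp (- e * (l1_norm s y)\<^sup>2)) * window_integral s k e y f \<le> (step ^^ k) f (x, y))"

lemma step_minorized_exists: "\<exists>a c. a > 0 \<and> c > 0 \<and> step_minorized a c"
proof -
  obtain A c where A: "A > 0" "c > 0" and dens: "\<And>x y z. x \<in> {1,2} \<Longrightarrow>
      A * exp (- c * z\<^sup>2) * exp (- c * (l1_norm s y)\<^sup>2) \<le> normal_density (ar_mean s \<theta> x y) (ms_sigma \<theta> x) z"
    using normal_density_ar_mean_lower_bound by blast
  define p where "p = min_trans_prob"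
  have p: "p > 0" using min_trans_prob_pos by (simp add: p_def)
  have "step_minorized (p * A) c"
    unfolding step_minorized_def
  proof (intro ballI allI)
    fix x :: nat and y :: "nat \<Rightarrow> real" and f :: "nat \<times> (nat \<Rightarrow> real) \<Rightarrow> ennreal"
    assume x: "x \<in> {1,2}" and f: "f \<in> borel_measurable (state_space s)"
    let ?g = "\<lambda>z. ennreal (A * exp (- c * z\<^sup>2) * exp (- c * (l1_norm s y)\<^sup>2))"
    have fm: "(\<lambda>z. f (x', Defs.shift s y z)) \<in> borel_measurable lborel" if "x' \<in> {1,2}" for x'
      using measurable_after_shift[OF one_le_s f that] .
    have "(\<integral>\<^sup>+ z. ennreal (p * A * exp (- c * z\<^sup>2) * exp (- c * (l1_norm s y)\<^sup>2))
        * (\<Sum>x'\<in>{1,2}. f (x', Defs.shift s y z)) \<partial>lborel)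
      = (\<Sum>x'\<in>{1,2::nat}. ennreal p * \<integral>\<^sup>+ z. ?g z * f (x', Defs.shift s y z) \<partial>lborel)"
    proof -
      have "(\<integral>\<^sup>+ z. ennreal (p * A * exp (- c * z\<^sup>2) * exp (- c * (l1_norm s y)\<^sup>2))
          * (\<Sum>x'\<in>{1,2}. f (x', Defs.shift s y z)) \<partial>lborel)
        = (\<integral>\<^sup>+ z. (\<Sum>x'\<in>{1,2::nat}. ennreal p * (?g z * f (x', Defs.shift s y z))) \<partial>lborel)"
        using p A by (intro nn_integral_cong) (auto simp: sum_distrib_left ennreal_mult mult.assoc distrib_left)
      also have "\<dots> = (\<Sum>x'\<in>{1,2::nat}. \<integral>\<^sup>+ z. ennreal p * (?g z * f (x', Defs.shift s y z)) \<partial>lborel)"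
        using fm by (intro nn_integral_sum) auto
      also have "\<dots> = (\<Sum>x'\<in>{1,2::nat}. ennreal p * \<integral>\<^sup>+ z. ?g z * f (x', Defs.shift s y z) \<partial>lborel)"
        using fm by (intro sum.cong refl nn_integral_cmult) auto
      finally show ?thesis .
    qed
    also have "\<dots> \<le> (\<Sum>x'\<in>{1,2::nat}. ennreal (trans_prob s r \<theta> x x' y) *
        \<integral>\<^sup>+ z. ennreal (normal_density (ar_mean s \<theta> x' y) (ms_sigma \<theta> x') z) * f (x', Defs.shift s y z) \<partial>lborel)"
    proof (intro sum_mono mult_mono)
      fix x' :: nat assume x': "x' \<in> {1,2}"
      show "ennreal p \<le> ennreal (trans_prob s r \<theta> x x' y)"
        using min_trans_prob_le[OF x x'] by (simp add: p_def ennreal_leI)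
      show "(\<integral>\<^sup>+ z. ?g z * f (x', Defs.shift s y z) \<partial>lborel) \<le> (\<integral>\<^sup>+ z.
          ennreal (normal_density (ar_mean s \<theta> x' y) (ms_sigma \<theta> x') z) * f (x', Defs.shift s y z) \<partial>lborel)"
        by (intro nn_integral_mono mult_right_mono ennreal_leI dens[OF x']) auto
    qed auto
    also have "\<dots> = step f (x, y)"
      unfolding msar_step_def by simp
    finally show "(\<integral>\<^sup>+ z. ennreal (p * A * exp (- c * z\<^sup>2) * exp (- c * (l1_norm s y)\<^sup>2))
        * (\<Sum>x'\<in>{1,2}. f (x', Defs.shift s y z)) \<partial>lborel) \<le> step f (x, y)" .
  qed
  then show ?thesis using p A by (intro exI[of _ "p * A"] exI[of _ c]) simp
qed

lemma power_minorized_one: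
  assumes "a \<ge> 0" "c \<ge> 0" and "step_minorized a c"
  shows "power_minorized 1 a c"
  unfolding power_minorized_def
proof (intro ballI allI)
  fix x :: nat and y :: "nat \<Rightarrow> real" and f :: "nat \<times> (nat \<Rightarrow> real) \<Rightarrow> ennreal"
  assume x: "x \<in> {1,2}" and f: "f \<in> borel_measurable (state_space s)"
  have [measurable]: "(\<lambda>z. \<Sum>x'\<in>{1,2}. f (x', Defs.shift s y z)) \<in> borel_measurable lborel"
    using measurable_after_shift[OF one_le_s f] by (intro borel_measurable_sum) auto
  have "ennreal (a * exp (- c * (l1_norm s y)\<^sup>2)) * window_integral s 1 c y f
      = (\<integral>\<^sup>+ z. ennreal (a * exp (- c * (l1_norm s y)\<^sup>2)) * (ennreal (exp (- c * z\<^sup>2))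
          * (\<Sum>x'\<in>{1,2}. f (x', Defs.shift s y z))) \<partial>lborel)"
    unfolding window_integral_one[OF one_le_s f] by (intro nn_integral_cmult[symmetric]) measurable
  also have "\<dots> = (\<integral>\<^sup>+ z. ennreal (a * exp (- c * z\<^sup>2) * exp (- c * (l1_norm s y)\<^sup>2))
      * (\<Sum>x'\<in>{1,2}. f (x', Defs.shift s y z)) \<partial>lborel)"
    using assms(1) by (intro nn_integral_cong) (simp add: ennreal_mult mult_ac)
  also have "\<dots> \<le> step f (x, y)"
    using assms(3) x f unfolding step_minorized_def by blast
  finally show "ennreal (a * exp (- c * (l1_norm s y)\<^sup>2)) * window_integral s 1 c y f \<le> (step ^^ 1) f (x, y)"
    by simp
qed

text \<open>Since \<open>\<parallel>shift_window s k y w\<parallel>\<^sub>1 \<le> \<parallel>y\<parallel>\<^sub>1 + \<parallel>w\<parallel>\<^sub>1\<close>, the Gaussian weight of the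
  intermediate window splits into weights on \<open>y\<close> and on the observations.\<close>

lemma step_after_window_lower_bound:
  assumes k: "k < s" and ac: "step_minorized a c" "0 \<le> a" "0 \<le> c" and e: "0 \<le> e"
    and f: "f \<in> borel_measurable (state_space s)"
  shows "ennreal (a * exp (- (2 * c) * (l1_norm s y)\<^sup>2)) * (\<integral>\<^sup>+ z. ennreal (exp (- (e + 3 * c) * (l1_norm k w + \<bar>z\<bar>)\<^sup>2))
        * (\<Sum>x'\<in>{1,2}. f (x', Defs.shift s (shift_window s k y w) z)) \<partial>lborel)
    \<le> ennreal (exp (- e * (l1_norm k w)\<^sup>2)) * (\<Sum>x'\<in>{1,2}. step f (x', shift_window s k y w))"
proof -
  define p where "p = shift_window s k y w"
  define C where "C = a * exp (- (2 * c) * (l1_norm s y)\<^sup>2)"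
  have [measurable]: "(\<lambda>z. \<Sum>x'\<in>{1,2}. f (x', Defs.shift s p z)) \<in> borel_measurable lborel"
    using measurable_after_shift[OF one_le_s f] by (intro borel_measurable_sum) auto
  have lp: "l1_norm s p \<le> l1_norm s y + l1_norm k w"
    unfolding p_def using k by (intro l1_norm_shift_window) simp
  have "ennreal C * (\<integral>\<^sup>+ z. ennreal (exp (- (e + 3 * c) * (l1_norm k w + \<bar>z\<bar>)\<^sup>2))
        * (\<Sum>x'\<in>{1,2}. f (x', Defs.shift s p z)) \<partial>lborel)
      = (\<integral>\<^sup>+ z. ennreal (C * exp (- (e + 3 * c) * (l1_norm k w + \<bar>z\<bar>)\<^sup>2))
        * (\<Sum>x'\<in>{1,2}. f (x', Defs.shift s p z)) \<partial>lborel)"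
  proof -
    have "(\<lambda>z. ennreal (exp (- (e + 3 * c) * (l1_norm k w + \<bar>z\<bar>)\<^sup>2))
        * (\<Sum>x'\<in>{1,2}. f (x', Defs.shift s p z))) \<in> borel_measurable lborel"
      by measurable
    then show ?thesis
      using ac by (simp add: nn_integral_cmult[symmetric] C_def ennreal_mult mult.assoc)
  qed
  also have "\<dots> \<le> (\<integral>\<^sup>+ z. ennreal (exp (- e * (l1_norm k w)\<^sup>2))
        * (ennreal (a * exp (- c * z\<^sup>2) * exp (- c * (l1_norm s p)\<^sup>2)) * (\<Sum>x'\<in>{1,2}. f (x', Defs.shift s p z))) \<partial>lborel)"
  proof (intro nn_integral_mono)
    fix z
    have "C * exp (- (e + 3 * c) * (l1_norm k w + \<bar>z\<bar>)\<^sup>2)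
        \<le> exp (- e * (l1_norm k w)\<^sup>2) * (a * exp (- c * z\<^sup>2) * exp (- c * (l1_norm s p)\<^sup>2))"
    proof -
      have "exp (- (2 * c) * (l1_norm s y)\<^sup>2) * exp (- (e + 3 * c) * (l1_norm k w + \<bar>z\<bar>)\<^sup>2)
          \<le> exp (- e * (l1_norm k w)\<^sup>2) * (exp (- c * z\<^sup>2) * exp (- c * (l1_norm s p)\<^sup>2))"
        using gaussian_exponent_split[of c e "l1_norm k w" "l1_norm s p" "l1_norm s y" z]
          ac e lp l1_norm_nonneg[of k w] l1_norm_nonneg[of s p]
        by (simp flip: exp_add) (simp add: algebra_simps)
      from mult_left_mono[OF this ac(2)] show ?thesis
        by (simp add: C_def mult_ac)
    qed
    then show "ennreal (C * exp (- (e + 3 * c) * (l1_norm k w + \<bar>z\<bar>)\<^sup>2)) * (\<Sum>x'\<in>{1,2}. f (x', Defs.shift s p z))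
        \<le> ennreal (exp (- e * (l1_norm k w)\<^sup>2))
          * (ennreal (a * exp (- c * z\<^sup>2) * exp (- c * (l1_norm s p)\<^sup>2)) * (\<Sum>x'\<in>{1,2}. f (x', Defs.shift s p z)))"
      using ac by (simp add: ennreal_mult[symmetric] mult.assoc[symmetric] ennreal_leI mult_right_mono)
  qed
  also have "\<dots> = ennreal (exp (- e * (l1_norm k w)\<^sup>2)) * (\<integral>\<^sup>+ z.
      ennreal (a * exp (- c * z\<^sup>2) * exp (- c * (l1_norm s p)\<^sup>2)) * (\<Sum>x'\<in>{1,2}. f (x', Defs.shift s p z)) \<partial>lborel)"
    by (intro nn_integral_cmult) measurable
  also have "\<dots> \<le> ennreal (exp (- e * (l1_norm k w)\<^sup>2)) * step f (1, p)"
    using ac(1) f unfolding step_minorized_def by (intro mult_left_mono) auto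
  also have "\<dots> \<le> ennreal (exp (- e * (l1_norm k w)\<^sup>2)) * (\<Sum>x'\<in>{1,2}. step f (x', p))"
    by (intro mult_left_mono) auto
  finally show ?thesis unfolding p_def C_def .
qed

lemma power_minorized_Suc:
  assumes k: "Suc k \<le> s" and ac: "a > 0" "c > 0" "step_minorized a c"
    and De: "D > 0" "e > 0" "power_minorized k D e"
  shows "power_minorized (Suc k) (D * a) (e + 3 * c)"
  unfolding power_minorized_def
proof (intro ballI allI)
  fix x :: nat and y :: "nat \<Rightarrow> real" and f :: "nat \<times> (nat \<Rightarrow> real) \<Rightarrow> ennreal"
  assume x: "x \<in> {1,2}" and f: "f \<in> borel_measurable (state_space s)"
  define C where "C = a * exp (- (2 * c) * (l1_norm s y)\<^sup>2)"
  have "exp (- (e + 3 * c) * (l1_norm s y)\<^sup>2) \<le> exp (- e * (l1_norm s y)\<^sup>2) * exp (- (2 * c) * (l1_norm s y)\<^sup>2)"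
    using ac by (simp add: algebra_simps flip: exp_add)
  then have "ennreal (D * a * exp (- (e + 3 * c) * (l1_norm s y)\<^sup>2)) \<le> ennreal (D * exp (- e * (l1_norm s y)\<^sup>2)) * ennreal C"
    using ac De unfolding C_def by (auto simp: ennreal_mult[symmetric] mult_ac intro!: ennreal_leI mult_left_mono)
  then have "ennreal (D * a * exp (- (e + 3 * c) * (l1_norm s y)\<^sup>2)) * window_integral s (Suc k) (e + 3 * c) y f
      \<le> ennreal (D * exp (- e * (l1_norm s y)\<^sup>2)) * (ennreal C * window_integral s (Suc k) (e + 3 * c) y f)"
    by (simp add: mult.assoc[symmetric] mult_right_mono)
  also have "ennreal C * window_integral s (Suc k) (e + 3 * c) y f \<le> window_integral s k e y (step f)"
    using k ac De f unfolding window_integral_Suc_cmult[OF k f]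
    unfolding window_integral_def C_def by (intro nn_integral_mono step_after_window_lower_bound) auto
  then have "ennreal (D * exp (- e * (l1_norm s y)\<^sup>2)) * (ennreal C * window_integral s (Suc k) (e + 3 * c) y f)
      \<le> ennreal (D * exp (- e * (l1_norm s y)\<^sup>2)) * window_integral s k e y (step f)"
    by (rule mult_left_mono) simp
  also have "\<dots> \<le> (step ^^ k) (step f) (x, y)"
    using De(3) x measurable_step[OF f] unfolding power_minorized_def by blast
  finally show "ennreal (D * a * exp (- (e + 3 * c) * (l1_norm s y)\<^sup>2)) * window_integral s (Suc k) (e + 3 * c) y f
      \<le> (step ^^ Suc k) f (x, y)"
    by (simp add: funpow_Suc_right del: funpow.simps)
qed

lemma power_minorized_exists:
  assumes "1 \<le> k" "k \<le> s"
  shows "\<exists>D e. D > 0 \<and> e > 0 \<and> power_minorized k D e"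
  using assms
proof (induction k rule: dec_induct)
  case base
  then show ?case
    using step_minorized_exists power_minorized_one by (meson less_imp_le)
next
  case (step k)
  then obtain D e where "D > 0" "e > 0" "power_minorized k D e" by auto
  moreover obtain a c where "a > 0" "c > 0" "step_minorized a c"
    using step_minorized_exists by blast
  ultimately show ?case
    using power_minorized_Suc[of k a c D e] step.prems by (intro exI conjI) auto
qed

lemma minorization_power_s:
  assumes "power_minorized s D e" "D > 0" "e > 0"
    and x: "x \<in> {1,2}" and y: "l1_norm s y \<le> B" and A: "A \<in> sets (state_space s)"
  shows "emeasure (weighted_measure s e (D * exp (- e * B\<^sup>2))) A \<le> msar_Pn s r \<theta> s A (x, y)"
proof -
  have "(l1_norm s y)\<^sup>2 \<le> B\<^sup>2"
    using y l1_norm_nonneg by (intro power_mono)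
  then have "D * exp (- e * B\<^sup>2) \<le> D * exp (- e * (l1_norm s y)\<^sup>2)"
    using assms(2,3) by (simp add: mult_left_mono)
  then have "emeasure (weighted_measure s e (D * exp (- e * B\<^sup>2))) A
      \<le> ennreal (D * exp (- e * (l1_norm s y)\<^sup>2)) * weighted_integral s e (indicator A)"
    using A assms(2) by (simp add: emeasure_weighted_measure ennreal_leI mult_right_mono)
  also have "\<dots> \<le> msar_Pn s r \<theta> s A (x, y)"
    using assms(1) x borel_measurable_indicator[OF A]
    unfolding power_minorized_def msar_Pn_def window_integral_full by blast
  finally show ?thesis .
qed

text \<open>One more step spreads the window over \<open>shift y z\<close> with \<open>z \<in> [0, 1]\<close>, where the
  bound for \<open>s\<close> steps still holds uniformly.\<close>

lemma minorization_power_Suc_s: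
  assumes ac: "step_minorized a c" "a > 0" "c > 0" and De: "power_minorized s D e" "D > 0" "e > 0"
    and x: "x \<in> {1,2}" and y: "l1_norm s y \<le> B" and A: "A \<in> sets (state_space s)"
  shows "emeasure (weighted_measure s e (a * exp (- c) * exp (- c * B\<^sup>2) * (D * exp (- e * (B + 1)\<^sup>2)))) A
    \<le> msar_Pn s r \<theta> (s + 1) A (x, y)"
proof -
  define g where "g = (step ^^ s) (indicator A)"
  define K where "K = D * exp (- e * (B + 1)\<^sup>2)"
  have K: "K \<ge> 0" using De by (simp add: K_def)
  have g: "g \<in> borel_measurable (state_space s)"
    unfolding g_def using A by (intro measurable_step_power) simp
  have "emeasure (weighted_measure s e (a * exp (- c) * exp (- c * B\<^sup>2) * K)) A
      = ennreal (a * exp (- c) * exp (- c * B\<^sup>2)) * emeasure (weighted_measure s e K) A"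
    using ac K A by (simp add: emeasure_weighted_measure ennreal_mult mult.assoc)
  also have "\<dots> = (\<integral>\<^sup>+ z. ennreal (a * exp (- c) * exp (- c * B\<^sup>2)) * emeasure (weighted_measure s e K) A
          * indicator {0..1::real} z \<partial>lborel)"
    by (subst nn_integral_cmult_indicator) auto
  also have "\<dots> \<le> (\<integral>\<^sup>+ z. ennreal (a * exp (- c * z\<^sup>2) * exp (- c * (l1_norm s y)\<^sup>2))
      * (\<Sum>x'\<in>{1,2}. g (x', Defs.shift s y z)) \<partial>lborel)"
  proof (intro nn_integral_mono)
    fix z :: real
    show "ennreal (a * exp (- c) * exp (- c * B\<^sup>2)) * emeasure (weighted_measure s e K) A * indicator {0..1} z
        \<le> ennreal (a * exp (- c * z\<^sup>2) * exp (- c * (l1_norm s y)\<^sup>2)) * (\<Sum>x'\<in>{1,2}. g (x', Defs.shift s y z))"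
    proof (cases "z \<in> {0..1}")
      case True
      have "z\<^sup>2 \<le> 1" "(l1_norm s y)\<^sup>2 \<le> B\<^sup>2"
        using True y l1_norm_nonneg[of s y] by (auto intro!: power_le_one power_mono)
      then have "a * exp (- c) * exp (- c * B\<^sup>2) \<le> a * exp (- c * z\<^sup>2) * exp (- c * (l1_norm s y)\<^sup>2)"
        using ac by (intro mult_mono mult_left_mono) (auto simp: mult_left_mono)
      moreover have "emeasure (weighted_measure s e K) A \<le> g (1, Defs.shift s y z)"
        unfolding K_def g_def msar_Pn_def[symmetric]
        using l1_norm_shift[OF one_le_s, of y z] True y A
        by (intro minorization_power_s[OF De]) auto
      ultimately have "ennreal (a * exp (- c) * exp (- c * B\<^sup>2)) * emeasure (weighted_measure s e K) A
          \<le> ennreal (a * exp (- c * z\<^sup>2) * exp (- c * (l1_norm s y)\<^sup>2)) * g (1, Defs.shift s y z)"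
        by (rule mult_mono[OF ennreal_leI]) auto
      also have "\<dots> \<le> ennreal (a * exp (- c * z\<^sup>2) * exp (- c * (l1_norm s y)\<^sup>2)) * (\<Sum>x'\<in>{1,2}. g (x', Defs.shift s y z))"
        by (intro mult_left_mono) auto
      finally show ?thesis using True by simp
    qed simp
  qed
  also have "\<dots> \<le> step g (x, y)"
    using ac(1) x g unfolding step_minorized_def by blast
  also have "\<dots> = msar_Pn s r \<theta> (s + 1) A (x, y)"
    unfolding g_def msar_Pn_def by simp
  finally show ?thesis unfolding K_def .
qed

lemma minorization_on_l1_ball:
  obtains \<nu> \<nu>' where "equivalent_measures \<nu> (state_space s)" "equivalent_measures \<nu>' (state_space s)"
    and "\<And>x y A. x \<in> {1,2} \<Longrightarrow> l1_norm s y \<le> B \<Longrightarrow> A \<in> sets (state_space s) \<Longrightarrow>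
      emeasure \<nu> A \<le> msar_Pn s r \<theta> s A (x, y) \<and> emeasure \<nu>' A \<le> msar_Pn s r \<theta> (s + 1) A (x, y)"
proof -
  obtain a c where ac: "a > 0" "c > 0" "step_minorized a c"
    using step_minorized_exists by blast
  obtain D e where De: "D > 0" "e > 0" "power_minorized s D e"
    using power_minorized_exists[OF one_le_s order_refl] by blast
  let ?\<nu> = "weighted_measure s e (D * exp (- e * B\<^sup>2))"
  let ?\<nu>' = "weighted_measure s e (a * exp (- c) * exp (- c * B\<^sup>2) * (D * exp (- e * (B + 1)\<^sup>2)))"
  show thesis
  proof (rule that)
    show "equivalent_measures ?\<nu> (state_space s)" "equivalent_measures ?\<nu>' (state_space s)"
      using ac De by (auto intro!: equivalent_weighted_measure)
    fix x :: nat and y A assume "x \<in> {1,2}" "l1_norm s y \<le> B" "A \<in> sets (state_space s)"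
    then show "emeasure ?\<nu> A \<le> msar_Pn s r \<theta> s A (x, y) \<and> emeasure ?\<nu>' A \<le> msar_Pn s r \<theta> (s + 1) A (x, y)"
      using minorization_power_s[OF De(3,1,2)] minorization_power_Suc_s[OF ac(3,1,2) De(3,1,2)] by blast
  qed
qed

lemma msar_Pn_pos:
  assumes x: "x \<in> {1,2}" and A: "A \<in> sets (state_space s)" "0 < emeasure (state_space s) A"
  shows "0 < msar_Pn s r \<theta> s A (x, y)" "0 < msar_Pn s r \<theta> (s + 1) A (x, y)"
proof -
  obtain \<nu> \<nu>' where "equivalent_measures \<nu> (state_space s)" "equivalent_measures \<nu>' (state_space s)"
    and "emeasure \<nu> A \<le> msar_Pn s r \<theta> s A (x, y)" "emeasure \<nu>' A \<le> msar_Pn s r \<theta> (s + 1) A (x, y)"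
    using minorization_on_l1_ball[of "l1_norm s y"] x A(1) by (metis order_refl)
  then show "0 < msar_Pn s r \<theta> s A (x, y)" "0 < msar_Pn s r \<theta> (s + 1) A (x, y)"
    using equivalent_measures_pos A by (metis order.strict_trans2)+
qed

lemma msar_psi_irreducible: "psi_irreducible (msar_Pn s r \<theta>) (state_space s) (state_space s)"
  unfolding psi_irreducible_def
  using msar_Pn_pos(1) one_le_s by (fastforce simp: space_state_space)

lemma step_one: "x \<in> {1,2} \<Longrightarrow> step (\<lambda>_. 1) (x, y) = 1"
  using sum_trans_prob sigma_pos by (simp add: msar_step_def nn_integral_normal_density)

lemma step_mono:
  assumes "\<And>x' z. x' \<in> {1,2} \<Longrightarrow> g (x', Defs.shift s y z) \<le> h (x', Defs.shift s y z)"
  shows "step g (x, y) \<le> step h (x, y)"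
  unfolding msar_step_def prod.case
  by (intro sum_mono mult_left_mono nn_integral_mono) (auto intro: assms)

lemma step_add:
  assumes f: "f \<in> borel_measurable (state_space s)" and g: "g \<in> borel_measurable (state_space s)"
  shows "step (\<lambda>p. f p + g p) (x, y) = step f (x, y) + step g (x, y)"
proof -
  let ?n = "\<lambda>x' z. ennreal (normal_density (ar_mean s \<theta> x' y) (ms_sigma \<theta> x') z)"
  have "(\<integral>\<^sup>+ z. ?n x' z * (f (x', Defs.shift s y z) + g (x', Defs.shift s y z)) \<partial>lborel)
      = (\<integral>\<^sup>+ z. ?n x' z * f (x', Defs.shift s y z) \<partial>lborel) + (\<integral>\<^sup>+ z. ?n x' z * g (x', Defs.shift s y z) \<partial>lborel)"
    if "x' \<in> {1,2}" for x'
    using measurable_after_shift[OF one_le_s f that] measurable_after_shift[OF one_le_s g that]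
    unfolding distrib_left by (intro nn_integral_add) (simp_all add: normal_density_def)
  then show ?thesis
    unfolding msar_step_def by (simp add: distrib_left sum.distrib)
qed

lemma step_indicator_compl:
  assumes x: "x \<in> {1,2}" and D: "D \<in> sets (state_space s)"
  shows "step (indicator D) (x, y) + step (indicator (space (state_space s) - D)) (x, y) = 1"
proof -
  have "step (indicator D) (x, y) + step (indicator (space (state_space s) - D)) (x, y)
      = step (\<lambda>p. indicator D p + indicator (space (state_space s) - D) p) (x, y)"
    using D by (intro step_add[symmetric]) auto
  also have "\<dots> = step (\<lambda>_. 1) (x, y)"
    using shift_in_Rs[OF one_le_s]
    by (intro order.antisym step_mono) (auto simp: space_state_space indicator_def)
  finally show ?thesis using step_one[OF x] by simp
qed

lemma msar_Pn_le_one: "x \<in> {1,2} \<Longrightarrow> msar_Pn s r \<theta> n A (x, y) \<le> 1"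
proof (induction n arbitrary: x y)
  case (Suc n)
  have "msar_Pn s r \<theta> (Suc n) A (x, y) = step (msar_Pn s r \<theta> n A) (x, y)"
    by (simp add: msar_Pn_def)
  also have "\<dots> \<le> step (\<lambda>_. 1) (x, y)"
    by (intro step_mono Suc.IH)
  finally show ?case using step_one[OF Suc.prems] by simp
qed (simp add: msar_Pn_def indicator_def)

lemma msar_Pn_cyclic_class:
  assumes d: "0 < d" and D: "\<forall>i<d. D i \<in> sets (state_space s)"
    and cyc: "\<forall>i<d. \<forall>p\<in>D i. msar_Pn s r \<theta> 1 (D (Suc i mod d)) p = 1"
  shows "i < d \<Longrightarrow> p \<in> D i \<Longrightarrow> E \<inter> D ((i + n) mod d) = {} \<Longrightarrow> msar_Pn s r \<theta> n E p = 0"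
proof (induction n arbitrary: i p)
  case 0
  then show ?case by (auto simp: msar_Pn_def indicator_def)
next
  case (Suc n)
  obtain x y where p: "p = (x, y)" by (cases p)
  define j where "j = Suc i mod d"
  have j: "j < d" "D j \<in> sets (state_space s)" using d D by (auto simp: j_def)
  have x: "x \<in> {1,2}"
    using Suc.prems D sets.sets_into_space p by (fastforce simp: space_state_space)
  have "step (indicator (space (state_space s) - D j)) (x, y) = 0"
    using step_indicator_compl[OF x j(2), of y] cyc Suc.prems p
    by (simp add: msar_Pn_def j_def)
  moreover have "msar_Pn s r \<theta> (Suc n) E p \<le> step (indicator (space (state_space s) - D j)) (x, y)"
  proof -
    have "msar_Pn s r \<theta> n E q \<le> indicator (space (state_space s) - D j) q"
      if "q \<in> space (state_space s)" for q
    proof (cases "q \<in> D j")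
      case True
      have "E \<inter> D ((j + n) mod d) = {}" using Suc.prems by (simp add: j_def mod_add_left_eq)
      then show ?thesis using Suc.IH[OF j(1) True] by simp
    next
      case False
      then show ?thesis using that msar_Pn_le_one by (auto simp: space_state_space)
    qed
    then show ?thesis
      unfolding p msar_Pn_def
      using shift_in_Rs[OF one_le_s] by (simp add: space_state_space) (intro step_mono, simp add: msar_Pn_def)
  qed
  ultimately show ?case by simp
qed

text \<open>A cycle of period \<open>d \<ge> 2\<close> cannot be compatible with positive transition
  probabilities after both \<open>s\<close> and \<open>s + 1\<close> steps, which land in distinct classes.\<close>

lemma msar_aperiodic: "aperiodic (msar_Pn s r \<theta>) (state_space s) (state_space s)"
  unfolding aperiodic_def
proof (intro notI, elim exE conjE)
  let ?M = "state_space s"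
  fix d and D :: "nat \<Rightarrow> (nat \<times> (nat \<Rightarrow> real)) set"
  assume d: "2 \<le> d" and D: "\<forall>i<d. D i \<in> sets ?M" and dj: "disjoint_family_on D {..<d}"
    and cyc: "\<forall>i<d. \<forall>p\<in>D i. msar_Pn s r \<theta> 1 (D (Suc i mod d)) p = 1"
    and null: "emeasure ?M (space ?M - (\<Union>i<d. D i)) = 0"
  have "(\<Union>i<d. D i) \<noteq> {}"
  proof
    assume "(\<Union>i<d. D i) = {}"
    with null show False using emeasure_state_space_pos[of s] by simp
  qed
  then obtain i x y where i: "i < d" and p: "(x, y) \<in> D i" by auto
  have x: "x \<in> {1,2}"
    using D i p sets.sets_into_space by (fastforce simp: space_state_space)
  define j j' where "j = (i + s) mod d" and "j' = (i + (s + 1)) mod d"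
  have jj': "j < d" "j' < d" "j \<noteq> j'"
    using d by (simp_all add: j_def j'_def) (simp add: mod_Suc)
  have "emeasure ?M (space ?M - D k) = 0" if "k \<in> {j, j'}" for k
  proof (rule ccontr)
    assume "emeasure ?M (space ?M - D k) \<noteq> 0"
    then have pos: "0 < msar_Pn s r \<theta> s (space ?M - D k) (x, y)" "0 < msar_Pn s r \<theta> (s + 1) (space ?M - D k) (x, y)"
      using msar_Pn_pos[OF x, of "space ?M - D k"] D jj' that by (auto simp: zero_less_iff_neq_zero)
    have zero: "msar_Pn s r \<theta> n (space ?M - D ((i + n) mod d)) (x, y) = 0" for n
      using msar_Pn_cyclic_class[OF _ D cyc i p] d by (metis Diff_disjoint inf_commute less_le_trans zero_less_numeral)
    show False
      using pos that zero[of s] zero[of "s + 1"] by (auto simp: j_def j'_def)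
  qed
  moreover have "space ?M \<subseteq> (space ?M - D j) \<union> (space ?M - D j')"
    using dj jj' unfolding disjoint_family_on_def by auto
  then have "emeasure ?M (space ?M) \<le> emeasure ?M (space ?M - D j) + emeasure ?M (space ?M - D j')"
    using D jj' by (intro order.trans[OF emeasure_mono emeasure_subadditive]) auto
  ultimately show False
    using emeasure_state_space_pos[of s] by simp
qed

lemma ball_set_small:
  assumes "is_norm_Rs s N"
  obtains \<nu> \<nu>' where "equivalent_measures \<nu> (state_space s)" "equivalent_measures \<nu>' (state_space s)"
    and "small_set (msar_Pn s r \<theta>) (state_space s) s \<nu> (ball_set s N R)"
    and "small_set (msar_Pn s r \<theta>) (state_space s) (s + 1) \<nu>' (ball_set s N R)"
proof -
  interpret Rs_norm s N by (rule Rs_norm.intro[OF assms])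
  obtain \<kappa> where \<kappa>: "\<kappa> > 0" "\<And>y. y \<in> space (Rs s) \<Longrightarrow> \<kappa> * l1_norm s y \<le> N y"
    using l1_norm_le_norm by blast
  obtain \<nu> \<nu>' where eq: "equivalent_measures \<nu> (state_space s)" "equivalent_measures \<nu>' (state_space s)"
    and minor: "\<And>x y A. x \<in> {1,2} \<Longrightarrow> l1_norm s y \<le> R / \<kappa> \<Longrightarrow> A \<in> sets (state_space s) \<Longrightarrow>
      emeasure \<nu> A \<le> msar_Pn s r \<theta> s A (x, y) \<and> emeasure \<nu>' A \<le> msar_Pn s r \<theta> (s + 1) A (x, y)"
    using minorization_on_l1_ball by blast
  have ball: "x \<in> {1,2} \<and> l1_norm s y \<le> R / \<kappa>" if "(x, y) \<in> ball_set s N R" for x y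
    using that \<kappa> by (auto simp: ball_set_def field_simps intro: order_trans)
  have "\<forall>p\<in>ball_set s N R. \<forall>A\<in>sets (state_space s).
      emeasure \<nu> A \<le> msar_Pn s r \<theta> s A p \<and> emeasure \<nu>' A \<le> msar_Pn s r \<theta> (s + 1) A p"
  proof (intro ballI)
    fix p A assume "p \<in> ball_set s N R" "A \<in> sets (state_space s)"
    then show "emeasure \<nu> A \<le> msar_Pn s r \<theta> s A p \<and> emeasure \<nu>' A \<le> msar_Pn s r \<theta> (s + 1) A p"
      using minor ball by (cases p) blast
  qed
  moreover have "sets \<nu> = sets (state_space s)" "sets \<nu>' = sets (state_space s)"
    using eq unfolding equivalent_measures_def by auto
  moreover have "0 < emeasure \<nu> (space (state_space s))" "0 < emeasure \<nu>' (space (state_space s))"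
    using eq emeasure_state_space_pos[of s] by (auto intro: equivalent_measures_pos)
  ultimately have "small_set (msar_Pn s r \<theta>) (state_space s) s \<nu> (ball_set s N R)"
    "small_set (msar_Pn s r \<theta>) (state_space s) (s + 1) \<nu>' (ball_set s N R)"
    unfolding small_set_def using ball_set_measurable by auto
  then show thesis using eq that by blast
qed

end

theorem proposition1:
  fixes s r :: nat and \<theta> :: msar_param and N :: "(nat \<Rightarrow> real) \<Rightarrow> real"
  assumes "1 \<le> s" and "1 \<le> r" and "r \<le> s"
    and "\<theta> \<in> theta_tilde"
    and "is_norm_Rs s N"
  shows "psi_irreducible (msar_Pn s r \<theta>) (state_space s) (state_space s)
    \<and> (\<forall>R>0. \<exists>\<nu>s \<nu>s1.
          equivalent_measures \<nu>s (state_space s) \<and> equivalent_measures \<nu>s1 (state_space s)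
        \<and> small_set (msar_Pn s r \<theta>) (state_space s) s \<nu>s (ball_set s N R)
        \<and> small_set (msar_Pn s r \<theta>) (state_space s) (s + 1) \<nu>s1 (ball_set s N R))
    \<and> aperiodic (msar_Pn s r \<theta>) (state_space s) (state_space s)"
proof -
  interpret msar_model s r \<theta>
    using assms(1-4) by unfold_locales
  show ?thesis
    using msar_psi_irreducible msar_aperiodic ball_set_small[OF assms(5)] by metis
qed

end
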